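(* Let $k$ be a field, $e,h \geq 1$ integers, $1 \leq i \leq e$, and $M$ a finite-dimensional $k[T]/T^e$-module generated by at most $h$ elements. Assume $N \subseteq M$ is a $k[T]$-submodule with $T^i N = 0$ and $T^{e-i} M \subseteq N$. Regard $N$ as a $k[T]/T^i$-module and $M/N$ as a $k[T]/T^{e-i}$-module. Then $\mathrm{Hdg}(M) \geq \mathrm{Hdg}(N) \star \mathrm{Hdg}(M/N)$, i.e. $\mathrm{Hdg}(M)(x) \geq \mathrm{Hdg}(N) \star \mathrm{Hdg}(M/N)(x)$ for all $0 \le x \le h$.
   Context: For a $k[T]/T^m$-module $Q$ generated by at most $h$ elements, write $Q \simeq \bigoplus_{j=1}^h k[T]/T^{a_j}$ with $0 \leq a_j \leq m$; its Hodge polygon $\mathrm{Hdg}(Q)$ is the convex polygon on $[0,h]$ starting at the origin with slopes $\frac{a_1}{m}, \dots, \frac{a_h}{m}$ (each on an interval of length $1$, in increasing order); it lies in $\mathcal{P}_m$, the set of convex polygons on $[0,h]$ starting at the origin with integral breakpoint $x$-coordinates and slopes in $\frac1m\mathbb{Z}\cap[0,1]$. For $P_1 \in \mathcal{P}_{N_1}$ and $P_2 \in \mathcal{P}_{N_2}$, $P_1 \star P_2 \in \mathcal{P}_{N_1+N_2}$ is defined by $(P_1 \star P_2)(x) = \frac{1}{N_1+N_2}(N_1 P_1(x) + N_2 P_2(x))$. *)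

theory Defs
  imports Complex_Main
begin

text \<open>A k[T]-module is modelled as a k-subspace M of a k-vector space (type 'v with scalar
multiplication scale) together with a k-linear endomorphism T leaving M invariant.
For k[T]-submodules N of M, the predicate cyc_decomp scale T M N m a expresses
M/N = direct sum over j of k[T]/T^(a_j), each a_j at most m:
there are v_j in M with T^(a_j) v_j in N such that the vectors T^l v_j (l < a_j)
form a k-basis of M modulo N (linearly independent modulo N and spanning M together with N).
The module M itself is the case N = {0}.\<close>

definition cyc_decomp ::
  "('k::field \<Rightarrow> 'v::ab_group_add \<Rightarrow> 'v) \<Rightarrow> ('v \<Rightarrow> 'v) \<Rightarrow> 'v set \<Rightarrow> 'v set \<Rightarrow> nat \<Rightarrow> nat list \<Rightarrow> bool"
where
  "cyc_decomp scale T M N m a \<longleftrightarrow>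
     (\<forall>j<length a. a ! j \<le> m) \<and>
     (\<exists>v. length v = length a \<and> set v \<subseteq> M \<and>
        (\<forall>j<length a. (T ^^ (a ! j)) (v ! j) \<in> N) \<and>
        (\<forall>c. (\<Sum>p\<in>{(j, l). j < length a \<and> l < a ! j}. scale (c p) ((T ^^ snd p) (v ! fst p))) \<in> N
              \<longrightarrow> (\<forall>p\<in>{(j, l). j < length a \<and> l < a ! j}. c p = 0)) \<and>
        M \<subseteq> module.span scale
               (N \<union> (\<lambda>p. (T ^^ snd p) (v ! fst p)) ` {(j, l). j < length a \<and> l < a ! j}))"

definition hdg_poly :: "nat \<Rightarrow> nat list \<Rightarrow> real \<Rightarrow> real" where
  "hdg_poly m a x =
     (let s = sort a; n = nat \<lfloor>x\<rfloor> in
        (\<Sum>j<n. real (s ! j) / real m) + (x - real n) * (real (s ! n) / real m))"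

text \<open>Hdg of the k[T]/T^m-module M/N (generated by at most h elements), using a
decomposition into h cyclic summands (zero summands allowed).\<close>

definition Hdg ::
  "('k::field \<Rightarrow> 'v::ab_group_add \<Rightarrow> 'v) \<Rightarrow> ('v \<Rightarrow> 'v) \<Rightarrow> 'v set \<Rightarrow> 'v set \<Rightarrow> nat \<Rightarrow> nat \<Rightarrow> real \<Rightarrow> real"
where
  "Hdg scale T M N h m = hdg_poly m (SOME a. length a = h \<and> cyc_decomp scale T M N m a)"

definition poly_star :: "nat \<Rightarrow> (real \<Rightarrow> real) \<Rightarrow> nat \<Rightarrow> (real \<Rightarrow> real) \<Rightarrow> real \<Rightarrow> real" where
  "poly_star N1 P1 N2 P2 x = (real N1 * P1 x + real N2 * P2 x) / real (N1 + N2)"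

end

(*
  For a finite-dimensional k[T]-module Q = M/N put D(t) = dim Q/T^t Q, formalised as quot_dim M N t.
  If Q is the direct sum of the k[T]/T^(a_j), then D(t) = sum_j min(a_j, t); for sorted exponents the
  sum of the n smallest ones, i.e. m times Hdg(Q) at x = n, equals the maximum over t of
  D(t) - (h - n) t. Rank-nullity for T^t1, applied to N and to T^t2 M + N, gives
  D_N(t1) + D_(M/N)(t2) <= D_M(t1 + t2); maximising over t1 and t2 yields the inequality at the
  integral points, and piecewise linearity extends it to [0, h]. The cyclic decompositions whose
  exponents define Hdg exist by induction on the exponent of T on M/N.
*)

theory Submission
  imports Defs
begin

(* Definitions made in the library locale vector_space itself would be captured by its global
   real_vector interpretation, so the general linear algebra is developed in this locale too. *)

locale kT_module = vector_space scale
  for scale :: "'k::field \<Rightarrow> 'v::ab_group_add \<Rightarrow> 'v" +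
  fixes T :: "'v \<Rightarrow> 'v"
  assumes linear_T: "Vector_Spaces.linear scale scale T"
begin

section \<open>Finitely spanned subspaces and independence modulo a subspace\<close>

definition finitely_spanned :: "'v set \<Rightarrow> bool" where
  "finitely_spanned S \<longleftrightarrow> (\<exists>B. finite B \<and> S \<subseteq> span B)"

lemma finitely_spanned_subset: "finitely_spanned S \<Longrightarrow> R \<subseteq> S \<Longrightarrow> finitely_spanned R"
  unfolding finitely_spanned_def by blast

lemma finitely_spanned_linear_image:
  assumes "Vector_Spaces.linear scale scale f" "finitely_spanned S"
  shows "finitely_spanned (f ` S)"
proof -
  interpret f: Vector_Spaces.linear scale scale f by (rule assms(1))
  obtain B where "finite B" "S \<subseteq> span B" using assms(2) unfolding finitely_spanned_def by blast
  then have "finite (f ` B)" "f ` S \<subseteq> span (f ` B)"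
    using f.span_image by auto
  then show ?thesis unfolding finitely_spanned_def by blast
qed

lemma finite_independent_in_span:
  assumes "finitely_spanned S" "independent B" "B \<subseteq> span S"
  shows "finite B"
proof -
  obtain C where "finite C" "S \<subseteq> span C" using assms(1) unfolding finitely_spanned_def by blast
  then show ?thesis
    using independent_span_bound[OF _ assms(2)] assms(3) span_minimal[of S "span C"] by blast
qed

lemma finitely_spanned_obtain_basis:
  assumes "finitely_spanned S"
  obtains B where "finite B" "B \<subseteq> S" "independent B" "S \<subseteq> span B" "card B = dim S"
  by (metis assms basis_exists finite_independent_in_span span_superset subset_trans)

lemma dim_le_if_subset_span:
  assumes "finitely_spanned W" "V \<subseteq> span W"
  shows "dim V \<le> dim W"
proof -
  obtain B where "finite B" "W \<subseteq> span B" "card B = dim W"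
    using finitely_spanned_obtain_basis[OF assms(1)] by metis
  then show ?thesis
    using dim_le_card[of V B] assms(2) span_minimal[of W "span B"] by fastforce
qed

lemma dim_insert_0: "dim (insert 0 S) = dim S"
  by (metis dim_span span_insert_0)

lemma in_span_disjoint_subsets_eq_0:
  assumes "independent B" "X \<subseteq> B" "Y \<subseteq> B" "X \<inter> Y = {}" "x \<in> span X" "x \<in> span Y"
  shows "x = 0"
proof -
  have "representation B x b = 0" for b
    using representation_extend[OF assms(1) assms(5,2)] representation_extend[OF assms(1) assms(6,3)]
      representation_ne_zero[of X x b] representation_ne_zero[of Y x b] assms(4) by force
  moreover have "x \<in> span B" using assms(2,5) span_mono by blast
  ultimately show ?thesis using sum_nonzero_representation_eq[OF assms(1)] by fastforce
qed

lemma dim_kernel_add_dim_image: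
  assumes f: "Vector_Spaces.linear scale scale f" and W: "subspace W" "finitely_spanned W"
  shows "dim {x\<in>W. f x = 0} + dim (f ` W) = dim W"
proof -
  interpret f: Vector_Spaces.linear scale scale f by (rule f)
  define K where "K = {x\<in>W. f x = 0}"
  have "finitely_spanned K" using finitely_spanned_subset[OF W(2)] by (auto simp: K_def)
  then obtain BK where BK: "finite BK" "BK \<subseteq> K" "independent BK" "K \<subseteq> span BK" "card BK = dim K"
    by (rule finitely_spanned_obtain_basis)
  obtain BW where BW: "BK \<subseteq> BW" "BW \<subseteq> W" "independent BW" "W \<subseteq> span BW"
    using maximal_independent_subset_extend[of BK W] BK(2,3) by (auto simp: K_def)
  have "finite BW" using finite_independent_in_span[OF W(2) BW(3)] BW(2) span_superset by blast
  define C where "C = BW - BK"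
  have "span BW = W" using span_subspace[OF BW(2,4) W(1)] .
  moreover have "span (f ` BW) = span (f ` C)"
  proof (rule span_eq[THEN iffD2, OF conjI])
    have "f ` BK \<subseteq> {0}" using BK(2) by (auto simp: K_def)
    then have "f ` BW \<subseteq> insert 0 (f ` C)" unfolding C_def by blast
    moreover have "insert 0 (f ` C) \<subseteq> span (f ` C)" using span_superset span_zero by simp
    ultimately show "f ` BW \<subseteq> span (f ` C)" by (rule order_trans)
    have "f ` C \<subseteq> f ` BW" unfolding C_def by blast
    then show "f ` C \<subseteq> span (f ` BW)" using span_superset[of "f ` BW"] by (rule order_trans)
  qed
  ultimately have image: "f ` W = span (f ` C)" using f.span_image by metis
  have inj: "inj_on f (span C)"
    unfolding f.inj_on_iff_eq_0[OF subspace_span]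
  proof (intro ballI impI)
    fix x assume x: "x \<in> span C" "f x = 0"
    have "x \<in> W" using x(1) span_mono[of C BW] \<open>span BW = W\<close> by (auto simp: C_def)
    then have "x \<in> span BK" using x(2) BK(4) by (auto simp: K_def)
    then show "x = 0" using in_span_disjoint_subsets_eq_0[OF BW(3) _ BW(1) _ x(1)] by (auto simp: C_def)
  qed
  have "independent C" using independent_mono[OF BW(3)] by (simp add: C_def)
  then have "dim (f ` W) = card (f ` C)"
    unfolding image using f.independent_injective_image[OF _ inj] dim_span_eq_card_independent by blast
  also have "\<dots> = card C" using card_image inj_on_subset[OF inj span_superset] by blast
  finally have "dim (f ` W) = card C" .
  moreover have "card C = dim W - dim K"
    using basis_card_eq_dim[OF BW(2,4,3)] BK(5) card_Diff_subset[OF BK(1) BW(1)] by (simp add: C_def)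
  moreover have "dim K \<le> dim W"
    using basis_card_eq_dim[OF BW(2,4,3)] BK(5) card_mono[OF \<open>finite BW\<close> BW(1)] by simp
  ultimately show ?thesis by (simp add: K_def)
qed

definition independent_mod :: "'v set \<Rightarrow> ('a \<Rightarrow> 'v) \<Rightarrow> 'a set \<Rightarrow> bool" where
  "independent_mod N f P \<longleftrightarrow> (\<forall>c. (\<Sum>p\<in>P. scale (c p) (f p)) \<in> N \<longrightarrow> (\<forall>p\<in>P. c p = 0))"

lemma independent_modD:
  "independent_mod N f P \<Longrightarrow> (\<Sum>p\<in>P. scale (c p) (f p)) \<in> N \<Longrightarrow> p \<in> P \<Longrightarrow> c p = 0"
  unfolding independent_mod_def by blast

lemma independent_mod_cong:
  "(\<And>p. p \<in> P \<Longrightarrow> f p = g p) \<Longrightarrow> independent_mod N f P \<longleftrightarrow> independent_mod N g P"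
  unfolding independent_mod_def by (simp cong: sum.cong)

lemma independent_mod_subset:
  assumes "independent_mod N f P" "Q \<subseteq> P" "finite P"
  shows "independent_mod N f Q"
  unfolding independent_mod_def
proof (intro allI impI ballI)
  fix c q assume c: "(\<Sum>p\<in>Q. scale (c p) (f p)) \<in> N" and q: "q \<in> Q"
  have "(\<Sum>p\<in>P. scale (if p \<in> Q then c p else 0) (f p)) = (\<Sum>p\<in>Q. scale (c p) (f p))"
    using assms(2,3) by (intro sum.mono_neutral_cong_right) auto
  then have "(\<Sum>p\<in>P. scale (if p \<in> Q then c p else 0) (f p)) \<in> N" using c by simp
  then have "(if q \<in> Q then c q else 0) = 0"
    by (rule independent_modD[OF assms(1)]) (use q assms(2) in blast)
  then show "c q = 0" using q by simp
qed

lemma independent_mod_image_iff: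
  assumes "inj_on h P"
  shows "independent_mod N f (h ` P) \<longleftrightarrow> independent_mod N (f \<circ> h) P"
proof
  assume ind: "independent_mod N f (h ` P)"
  show "independent_mod N (f \<circ> h) P"
    unfolding independent_mod_def
  proof (intro allI impI ballI)
    fix c p assume "(\<Sum>p\<in>P. scale (c p) ((f \<circ> h) p)) \<in> N" "p \<in> P"
    then show "c p = 0"
      using independent_modD[OF ind, of "\<lambda>q. c (the_inv_into P h q)" "h p"]
      by (simp add: sum.reindex[OF assms] the_inv_into_f_f[OF assms])
  qed
next
  assume ind: "independent_mod N (f \<circ> h) P"
  show "independent_mod N f (h ` P)"
    unfolding independent_mod_def
  proof (intro allI impI ballI)
    fix c q assume "(\<Sum>q\<in>h ` P. scale (c q) (f q)) \<in> N" "q \<in> h ` P"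
    then show "c q = 0"
      using independent_modD[OF ind, of "c \<circ> h"] by (auto simp: sum.reindex[OF assms])
  qed
qed

lemma sum_scale_indicator: "finite P \<Longrightarrow> p \<in> P \<Longrightarrow> (\<Sum>r\<in>P. scale (if r = p then 1 else 0) (f r)) = f p"
  by (simp add: if_distrib[of "\<lambda>c. scale c x" for x] cong: if_cong)

lemma independent_mod_inj_on_disjoint:
  assumes N: "subspace N" and P: "finite P" and ind: "independent_mod N f P"
  shows "inj_on f P" "f ` P \<inter> N = {}"
proof -
  show "inj_on f P"
  proof (rule inj_onI, rule ccontr)
    fix p q assume pq: "p \<in> P" "q \<in> P" "f p = f q" "p \<noteq> q"
    let ?c = "\<lambda>r. (if r = p then 1 else 0) - (if r = q then 1 else 0)"
    have "(\<Sum>r\<in>P. scale (?c r) (f r)) = 0"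
      using sum_scale_indicator[OF P pq(1)] sum_scale_indicator[OF P pq(2)] pq(3)
      by (simp add: scale_left_diff_distrib sum_subtractf)
    then have "(\<Sum>r\<in>P. scale (?c r) (f r)) \<in> N" using subspace_0[OF N] by simp
    from independent_modD[OF ind this pq(1)] show False using pq(4) by simp
  qed
  show "f ` P \<inter> N = {}"
  proof (rule ccontr)
    assume "f ` P \<inter> N \<noteq> {}"
    then obtain p where "p \<in> P" "f p \<in> N" by blast
    then have "(\<Sum>r\<in>P. scale (if r = p then 1 else 0) (f r)) \<in> N"
      using sum_scale_indicator[OF P] by simp
    from independent_modD[OF ind this \<open>p \<in> P\<close>] show False by simp
  qed
qed

lemma independent_Un_if_independent_mod:
  assumes N: "subspace N" "finite BN" "BN \<subseteq> N" "independent BN"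
    and P: "finite P" and ind: "independent_mod N f P"
  shows "independent (BN \<union> f ` P)"
proof (rule independent_if_scalars_zero)
  show "finite (BN \<union> f ` P)" using N(2) P by simp
  have inj: "inj_on f P" and disj: "f ` P \<inter> BN = {}"
    using independent_mod_inj_on_disjoint[OF N(1) P ind] N(3) by blast+
  fix u x assume su: "(\<Sum>x\<in>BN \<union> f ` P. scale (u x) x) = 0" and x: "x \<in> BN \<union> f ` P"
  have split: "(\<Sum>x\<in>BN \<union> f ` P. scale (u x) x) = (\<Sum>x\<in>BN. scale (u x) x) + (\<Sum>p\<in>P. scale (u (f p)) (f p))"
    using N(2) P disj by (subst sum.union_disjoint) (auto simp: sum.reindex[OF inj])
  have "(\<Sum>x\<in>BN. scale (u x) x) \<in> N"
    using N(3) by (intro subspace_sum[OF N(1)] subspace_scale[OF N(1)]) auto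
  moreover have "(\<Sum>p\<in>P. scale (u (f p)) (f p)) = - (\<Sum>x\<in>BN. scale (u x) x)"
    using su split by (simp add: eq_neg_iff_add_eq_0 add.commute)
  ultimately have "(\<Sum>p\<in>P. scale (u (f p)) (f p)) \<in> N" using subspace_neg[OF N(1)] by simp
  then have zP: "\<forall>p\<in>P. u (f p) = 0" using independent_modD[OF ind, of "u \<circ> f"] by simp
  then have "(\<Sum>x\<in>BN. scale (u x) x) = 0" using su split by simp
  then have "\<forall>x\<in>BN. u x = 0" using independentD[OF N(4) N(2) subset_refl] by blast
  then show "u x = 0" using x zP by blast
qed

lemma independent_mod_if_independent_Un:
  assumes N: "finite BN" "N \<subseteq> span BN" and P: "finite P"
    and inj: "inj_on f P" and disj: "f ` P \<inter> BN = {}" and ind: "independent (BN \<union> f ` P)"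
  shows "independent_mod N f P"
  unfolding independent_mod_def
proof (intro allI impI ballI)
  fix c p assume cN: "(\<Sum>p\<in>P. scale (c p) (f p)) \<in> N" and p: "p \<in> P"
  obtain d where d: "(\<Sum>p\<in>P. scale (c p) (f p)) = (\<Sum>v\<in>BN. scale (d v) v)"
    using cN N(2) span_finite[OF N(1)] by auto
  define u where "u x = (if x \<in> f ` P then c (the_inv_into P f x) else - d x)" for x
  have "(\<Sum>x\<in>BN \<union> f ` P. scale (u x) x) = (\<Sum>x\<in>BN. scale (u x) x) + (\<Sum>q\<in>P. scale (u (f q)) (f q))"
    using N(1) P disj by (subst sum.union_disjoint) (auto simp: sum.reindex[OF inj])
  also have "(\<Sum>x\<in>BN. scale (u x) x) = - (\<Sum>v\<in>BN. scale (d v) v)"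
    using disj by (auto simp: u_def sum_negf[symmetric] intro!: sum.cong) blast
  also have "(\<Sum>q\<in>P. scale (u (f q)) (f q)) = (\<Sum>q\<in>P. scale (c q) (f q))"
    by (simp add: u_def the_inv_into_f_f[OF inj])
  finally have "(\<Sum>x\<in>BN \<union> f ` P. scale (u x) x) = 0" using d by simp
  then have "u (f p) = 0"
    using independentD[OF ind _ subset_refl] N(1) P p by blast
  then show "c p = 0" using p by (simp add: u_def the_inv_into_f_f[OF inj])
qed

lemma dim_Un_image_independent_mod:
  assumes N: "subspace N" "finitely_spanned N" and P: "finite P" and ind: "independent_mod N f P"
  shows "dim (N \<union> f ` P) = dim N + card P"
proof -
  obtain BN where BN: "finite BN" "BN \<subseteq> N" "independent BN" "N \<subseteq> span BN" "card BN = dim N"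
    using finitely_spanned_obtain_basis[OF N(2)] by blast
  have inj: "inj_on f P" and disj: "f ` P \<inter> BN = {}"
    using independent_mod_inj_on_disjoint[OF N(1) P ind] BN(2) by blast+
  have indep: "independent (BN \<union> f ` P)"
    using independent_Un_if_independent_mod[OF N(1) BN(1-3) P ind] .
  have "span (N \<union> f ` P) = span (BN \<union> f ` P)"
  proof (rule span_eq[THEN iffD2, OF conjI])
    have "N \<subseteq> span (BN \<union> f ` P)" using BN(4) span_mono[of BN "BN \<union> f ` P"] by blast
    then show "N \<union> f ` P \<subseteq> span (BN \<union> f ` P)" using span_superset[of "BN \<union> f ` P"] by blast
    show "BN \<union> f ` P \<subseteq> span (N \<union> f ` P)" using BN(2) span_superset[of "N \<union> f ` P"] by blast
  qed
  then have "dim (N \<union> f ` P) = card (BN \<union> f ` P)"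
    using span_eq_dim dim_eq_card_independent[OF indep] by metis
  also have "\<dots> = dim N + card P"
    using card_Un_disjoint[of BN "f ` P"] BN(1,5) P disj card_image[OF inj] by (simp add: Int_commute)
  finally show ?thesis .
qed

lemma independent_mod_Un:
  assumes sub: "subspace N" "subspace K" "N \<subseteq> K" and fin: "finite P" "finite Q" "P \<inter> Q = {}"
    and P: "independent_mod K f P" and Q: "f ` Q \<subseteq> K" "independent_mod N f Q"
  shows "independent_mod N f (P \<union> Q)"
  unfolding independent_mod_def
proof (intro allI impI ballI)
  fix c p assume sum_N: "(\<Sum>p\<in>P \<union> Q. scale (c p) (f p)) \<in> N" and p: "p \<in> P \<union> Q"
  define sP where "sP = (\<Sum>p\<in>P. scale (c p) (f p))"
  define sQ where "sQ = (\<Sum>p\<in>Q. scale (c p) (f p))"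
  have split: "(\<Sum>p\<in>P \<union> Q. scale (c p) (f p)) = sP + sQ"
    unfolding sP_def sQ_def using fin by (rule sum.union_disjoint)
  have "sQ \<in> K" unfolding sQ_def using Q(1) by (intro subspace_sum[OF sub(2)] subspace_scale[OF sub(2)]) auto
  moreover have "sP + sQ \<in> K" using sum_N split sub(3) by auto
  ultimately have "sP \<in> K" using subspace_diff[OF sub(2)] by fastforce
  then have cP: "\<forall>q\<in>P. c q = 0" using independent_modD[OF P] unfolding sP_def by blast
  then have "sQ \<in> N" using sum_N split by (simp add: sP_def)
  then have "\<forall>q\<in>Q. c q = 0" using independent_modD[OF Q(2)] unfolding sQ_def by blast
  then show "c p = 0" using cP p by blast
qed

lemma independent_mod_extend:
  assumes N: "subspace N" "N \<subseteq> K" and K: "finitely_spanned K"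
    and g: "g ` {..<n} \<subseteq> K" "independent_mod N g {..<n}"
  obtains zs where "set zs \<subseteq> K"
    "independent_mod N (\<lambda>j. if j < n then g j else zs ! (j - n)) {..<n + length zs}"
    "K \<subseteq> span (N \<union> (\<lambda>j. if j < n then g j else zs ! (j - n)) ` {..<n + length zs})"
proof -
  obtain BN where BN: "finite BN" "BN \<subseteq> N" "independent BN" "N \<subseteq> span BN"
    using finitely_spanned_obtain_basis[OF finitely_spanned_subset[OF K N(2)]] by metis
  have inj_g: "inj_on g {..<n}" and disj_g: "g ` {..<n} \<inter> BN = {}"
    using independent_mod_inj_on_disjoint[OF N(1) _ g(2)] BN(2) by blast+
  have S0: "independent (BN \<union> g ` {..<n})"
    using independent_Un_if_independent_mod[OF N(1) BN(1-3) _ g(2)] by simp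
  have "BN \<union> g ` {..<n} \<subseteq> K" using BN(2) N(2) g(1) by blast
  then obtain BK where BK: "BN \<union> g ` {..<n} \<subseteq> BK" "BK \<subseteq> K" "independent BK" "K \<subseteq> span BK"
    using maximal_independent_subset_extend[OF _ S0] by blast
  have "finite BK" using finite_independent_in_span[OF K BK(3)] BK(2) span_superset by blast
  then obtain zs where zs: "set zs = BK - (BN \<union> g ` {..<n})" "distinct zs"
    using finite_distinct_list[of "BK - (BN \<union> g ` {..<n})"] by auto
  define h where "h j = (if j < n then g j else zs ! (j - n))" for j
  define I where "I = {..<n + length zs}"
  have h_image: "h ` I = g ` {..<n} \<union> set zs"
  proof
    show "h ` I \<subseteq> g ` {..<n} \<union> set zs"
      by (auto simp: h_def I_def)
    have "g ` {..<n} \<subseteq> h ` I" by (force simp: h_def I_def)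
    moreover have "zs ! k \<in> h ` I" if "k < length zs" for k
      using that image_eqI[of "zs ! k" h "n + k" I] by (simp add: h_def I_def)
    ultimately show "g ` {..<n} \<union> set zs \<subseteq> h ` I" by (auto simp: in_set_conv_nth)
  qed
  have "card (h ` I) = card (g ` {..<n}) + card (set zs)"
    unfolding h_image by (rule card_Un_disjoint) (simp, simp, use zs(1) in blast)
  also have "\<dots> = card I" using card_image[OF inj_g] distinct_card[OF zs(2)] by (simp add: I_def)
  finally have "card (h ` I) = card I" .
  then have "inj_on h I" by (simp add: I_def eq_card_imp_inj_on)
  moreover have "h ` I \<inter> BN = {}" using disj_g zs(1) unfolding h_image by blast
  moreover have "BN \<union> h ` I = BK" using BK(1) zs(1) unfolding h_image by blast
  ultimately have "independent_mod N h I"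
    using independent_mod_if_independent_Un[OF BN(1,4), of I h] BK(3) by (simp add: I_def)
  moreover have "K \<subseteq> span (N \<union> h ` I)"
    using BK(4) span_mono[of BK "N \<union> h ` I"] BN(2) \<open>BN \<union> h ` I = BK\<close> by blast
  moreover have "set zs \<subseteq> K" using zs(1) BK(2) by blast
  ultimately show ?thesis using that unfolding h_def I_def by blast
qed

section \<open>Cyclic decompositions\<close>

lemma linear_funpow: "Vector_Spaces.linear scale scale (T ^^ n)"
proof (induction n)
  case 0
  show ?case using linear_ident by simp
next
  case (Suc n)
  show ?case using Vector_Spaces.linear_compose[OF Suc linear_T] by (simp add: o_def)
qed

lemma module_hom_funpow: "module_hom scale scale (T ^^ n)"
  using linear_funpow module_hom_iff_linear by blast

lemma funpow_mem: "T ` S \<subseteq> S \<Longrightarrow> x \<in> S \<Longrightarrow> (T ^^ n) x \<in> S"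
  by (induction n) auto

definition cyc_index :: "nat list \<Rightarrow> (nat \<times> nat) set" where
  "cyc_index a = {(j, l). j < length a \<and> l < a ! j}"

definition cyc_vector :: "'v list \<Rightarrow> nat \<times> nat \<Rightarrow> 'v" where
  "cyc_vector v p = (T ^^ snd p) (v ! fst p)"

definition cyc_generators :: "'v set \<Rightarrow> 'v set \<Rightarrow> nat \<Rightarrow> nat list \<Rightarrow> 'v list \<Rightarrow> bool" where
  "cyc_generators M N m a v \<longleftrightarrow> length v = length a \<and> (\<forall>j<length a. a ! j \<le> m) \<and> set v \<subseteq> M \<and>
     (\<forall>j<length a. (T ^^ (a ! j)) (v ! j) \<in> N) \<and> independent_mod N (cyc_vector v) (cyc_index a) \<and>
     M \<subseteq> span (N \<union> cyc_vector v ` cyc_index a)"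

lemma cyc_decomp_iff_cyc_generators: "cyc_decomp scale T M N m a \<longleftrightarrow> (\<exists>v. cyc_generators M N m a v)"
  unfolding cyc_decomp_def cyc_generators_def cyc_index_def cyc_vector_def independent_mod_def by auto

lemma finite_cyc_index: "finite (cyc_index a)"
proof -
  have "cyc_index a \<subseteq> {..<length a} \<times> {..<sum_list a + 1}"
    unfolding cyc_index_def using elem_le_sum_list[of _ a] by fastforce
  then show ?thesis by (rule finite_subset) simp
qed

lemma card_cyc_index_above: "card {p \<in> cyc_index a. t \<le> snd p} = (\<Sum>j<length a. a ! j - t)"
proof -
  have "{p \<in> cyc_index a. t \<le> snd p} = Sigma {..<length a} (\<lambda>j. {t..<a ! j})"
    by (auto simp: cyc_index_def)
  then show ?thesis by (simp add: card_SigmaI)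
qed

lemma cyc_generators_funpow_mem:
  assumes "cyc_generators M N m a v" "T ` M \<subseteq> M" "j < length a"
  shows "(T ^^ k) (v ! j) \<in> M"
proof -
  have "v ! j \<in> set v" using assms(1,3) by (simp add: cyc_generators_def)
  then show ?thesis using assms(1) funpow_mem[OF assms(2)] by (auto simp: cyc_generators_def)
qed

lemma funpow_image_cyc_vector_subset:
  assumes N: "T ` N \<subseteq> N" and top: "\<forall>j<length a. (T ^^ (a ! j)) (v ! j) \<in> N"
  shows "(T ^^ t) ` cyc_vector v ` cyc_index a \<subseteq> N \<union> cyc_vector v ` {p \<in> cyc_index a. t \<le> snd p}"
proof
  fix y assume "y \<in> (T ^^ t) ` cyc_vector v ` cyc_index a"
  then obtain j l where jl: "j < length a" "l < a ! j" "y = (T ^^ (t + l)) (v ! j)"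
    by (auto simp: cyc_index_def cyc_vector_def funpow_add)
  show "y \<in> N \<union> cyc_vector v ` {p \<in> cyc_index a. t \<le> snd p}"
  proof (cases "t + l < a ! j")
    case True
    then have "(j, t + l) \<in> {p \<in> cyc_index a. t \<le> snd p}" using jl by (simp add: cyc_index_def)
    then show ?thesis using jl image_eqI[of y "cyc_vector v" "(j, t + l)"] by (simp add: cyc_vector_def)
  next
    case False
    then have "y = (T ^^ (t + l - a ! j + a ! j)) (v ! j)" using jl by simp
    then have "y = (T ^^ (t + l - a ! j)) ((T ^^ (a ! j)) (v ! j))" by (simp only: funpow_add o_apply)
    then show ?thesis using funpow_mem[OF N] top jl(1) by simp
  qed
qed

lemma span_funpow_image_Un_cyc_generators:
  assumes M: "T ` M \<subseteq> M" and N: "T ` N \<subseteq> N" and gen: "cyc_generators M N m a v"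
  shows "span ((T ^^ t) ` M \<union> N) = span (N \<union> cyc_vector v ` {p \<in> cyc_index a. t \<le> snd p})"
proof (rule span_eq[THEN iffD2, OF conjI])
  let ?P = "{p \<in> cyc_index a. t \<le> snd p}"
  have top: "\<forall>j<length a. (T ^^ (a ! j)) (v ! j) \<in> N"
    and span_M: "M \<subseteq> span (N \<union> cyc_vector v ` cyc_index a)"
    using gen by (simp_all add: cyc_generators_def)
  have "(T ^^ t) ` N \<subseteq> N" using funpow_mem[OF N] by blast
  then have "(T ^^ t) ` (N \<union> cyc_vector v ` cyc_index a) \<subseteq> N \<union> cyc_vector v ` ?P"
    using funpow_image_cyc_vector_subset[OF N top, of t] unfolding image_Un by blast
  then have "span ((T ^^ t) ` (N \<union> cyc_vector v ` cyc_index a)) \<subseteq> span (N \<union> cyc_vector v ` ?P)"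
    by (rule span_mono)
  moreover have "(T ^^ t) ` M \<subseteq> span ((T ^^ t) ` (N \<union> cyc_vector v ` cyc_index a))"
    unfolding module_hom.span_image[OF module_hom_funpow] using span_M by (rule image_mono)
  ultimately show "(T ^^ t) ` M \<union> N \<subseteq> span (N \<union> cyc_vector v ` ?P)"
    using span_superset[of "N \<union> cyc_vector v ` ?P"] by blast
  have "cyc_vector v ` ?P \<subseteq> (T ^^ t) ` M"
  proof
    fix x assume "x \<in> cyc_vector v ` ?P"
    then obtain j l where jl: "j < length a" "t \<le> l" "x = (T ^^ (t + (l - t))) (v ! j)"
      by (auto simp: cyc_index_def cyc_vector_def)
    then have "x = (T ^^ t) ((T ^^ (l - t)) (v ! j))" by (simp only: funpow_add o_apply)
    then show "x \<in> (T ^^ t) ` M" using cyc_generators_funpow_mem[OF gen M jl(1)] by blast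
  qed
  then show "N \<union> cyc_vector v ` ?P \<subseteq> span ((T ^^ t) ` M \<union> N)"
    using span_superset[of "(T ^^ t) ` M \<union> N"] by blast
qed

lemma dim_funpow_image_Un_cyc_generators:
  assumes M: "finitely_spanned M" "T ` M \<subseteq> M" and N: "subspace N" "N \<subseteq> M" "T ` N \<subseteq> N"
    and gen: "cyc_generators M N m a v"
  shows "dim ((T ^^ t) ` M \<union> N) = dim N + (\<Sum>j<length a. a ! j - t)"
proof -
  define P where "P = {p \<in> cyc_index a. t \<le> snd p}"
  have "P \<subseteq> cyc_index a" by (simp add: P_def)
  then have "finite P" "independent_mod N (cyc_vector v) P"
    using finite_subset[OF _ finite_cyc_index] independent_mod_subset[OF _ _ finite_cyc_index] gen
    unfolding cyc_generators_def by blast+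
  then have "dim (N \<union> cyc_vector v ` P) = dim N + card P"
    by (rule dim_Un_image_independent_mod[OF N(1) finitely_spanned_subset[OF M(1) N(2)]])
  moreover have "dim ((T ^^ t) ` M \<union> N) = dim (N \<union> cyc_vector v ` P)"
    unfolding P_def by (rule span_eq_dim[OF span_funpow_image_Un_cyc_generators[OF M(2) N(3) gen]])
  ultimately show ?thesis by (simp add: P_def card_cyc_index_above)
qed

definition quot_dim :: "'v set \<Rightarrow> 'v set \<Rightarrow> nat \<Rightarrow> nat" where
  "quot_dim M N t = dim M - dim ((T ^^ t) ` M \<union> N)"

lemma quot_dim_zero_submodule: "quot_dim M {0} t = dim M - dim ((T ^^ t) ` M)"
  by (simp add: quot_dim_def dim_insert_0)

lemma quot_dim_at_0: "N \<subseteq> M \<Longrightarrow> quot_dim M N 0 = 0"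
  by (simp add: quot_dim_def Un_absorb2)

lemma quot_dim_cyc_generators:
  assumes M: "finitely_spanned M" "T ` M \<subseteq> M" and N: "subspace N" "N \<subseteq> M" "T ` N \<subseteq> N"
    and gen: "cyc_generators M N m a v"
  shows "quot_dim M N t = (\<Sum>j<length a. min (a ! j) t)"
proof -
  note dims = dim_funpow_image_Un_cyc_generators[OF assms]
  have "dim M = dim N + (\<Sum>j<length a. a ! j)"
    using dims[of 0] N(2) by (simp add: Un_absorb2)
  moreover have "(\<Sum>j<length a. a ! j) = (\<Sum>j<length a. min (a ! j) t) + (\<Sum>j<length a. a ! j - t)"
    unfolding sum.distrib[symmetric] by (rule sum.cong) auto
  ultimately show ?thesis unfolding quot_dim_def dims by simp
qed

lemma quot_dim_superadditive:
  assumes M: "subspace M" "finitely_spanned M" "T ` M \<subseteq> M" and N: "subspace N" "N \<subseteq> M" "T ` N \<subseteq> N"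
  shows "quot_dim N {0} t1 + quot_dim M N t2 \<le> quot_dim M {0} (t1 + t2)"
proof -
  define W where "W = span ((T ^^ t2) ` M \<union> N)"
  have "(T ^^ t2) ` M \<union> N \<subseteq> M" using N(2) funpow_mem[OF M(3)] by blast
  then have WM: "W \<subseteq> M" unfolding W_def using span_minimal[OF _ M(1)] by blast
  have fs_W: "finitely_spanned W" and fs_N: "finitely_spanned N"
    using finitely_spanned_subset[OF M(2)] WM N(2) by blast+
  have NW: "N \<subseteq> W" unfolding W_def using span_superset by blast
  note rank_nullity = dim_kernel_add_dim_image[OF linear_funpow]
  have W: "dim {x\<in>W. (T ^^ t1) x = 0} + dim ((T ^^ t1) ` W) = dim W"
    by (rule rank_nullity) (use fs_W in \<open>simp_all add: W_def\<close>)
  have N': "dim {x\<in>N. (T ^^ t1) x = 0} + dim ((T ^^ t1) ` N) = dim N"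
    by (rule rank_nullity[OF N(1) fs_N])
  have "{x\<in>N. (T ^^ t1) x = 0} \<subseteq> {x\<in>W. (T ^^ t1) x = 0}" using NW by blast
  moreover have "finitely_spanned {x\<in>W. (T ^^ t1) x = 0}"
    by (rule finitely_spanned_subset[OF fs_W]) blast
  ultimately have "dim {x\<in>N. (T ^^ t1) x = 0} \<le> dim {x\<in>W. (T ^^ t1) x = 0}"
    by (intro dim_le_if_subset_span) (auto intro: span_base)
  moreover have "dim W \<le> dim M"
    by (rule dim_le_if_subset_span[OF M(2)]) (use WM in \<open>auto intro: span_base\<close>)
  moreover have "dim ((T ^^ (t1 + t2)) ` M) \<le> dim ((T ^^ t1) ` W)"
  proof (rule dim_le_if_subset_span[OF finitely_spanned_linear_image[OF linear_funpow fs_W]])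
    have "(T ^^ t2) ` M \<subseteq> W" unfolding W_def by (auto intro: span_base)
    then have "(T ^^ (t1 + t2)) ` M \<subseteq> (T ^^ t1) ` W" by (auto simp: funpow_add)
    then show "(T ^^ (t1 + t2)) ` M \<subseteq> span ((T ^^ t1) ` W)" using span_superset by (rule order_trans)
  qed
  moreover have "dim W = dim ((T ^^ t2) ` M \<union> N)" unfolding W_def by (rule dim_span)
  ultimately show ?thesis using W N' unfolding quot_dim_zero_submodule unfolding quot_dim_def by linarith
qed

lemma subspace_preimage: "subspace M \<Longrightarrow> subspace N \<Longrightarrow> subspace {x\<in>M. T x \<in> N}"
proof -
  interpret T: Vector_Spaces.linear scale scale T by (rule linear_T)
  assume "subspace M" "subspace N"
  then have "subspace (M \<inter> T -` N)" by (intro subspace_inter T.subspace_vimage)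
  then show ?thesis by (simp add: Int_def)
qed

lemma independent_mod_funpow_generators:
  assumes M: "subspace M" "T ` M \<subseteq> M" and gen: "cyc_generators M {x\<in>M. T x \<in> N} m a v"
    and pos: "\<forall>j<length a. 0 < a ! j"
  shows "independent_mod N (\<lambda>j. (T ^^ (a ! j)) (v ! j)) {..<length a}"
  unfolding independent_mod_def
proof (intro allI impI ballI)
  interpret T: Vector_Spaces.linear scale scale T by (rule linear_T)
  define top where "top j = (j, a ! j - 1)" for j
  have inj: "inj_on top {..<length a}" by (simp add: inj_on_def top_def)
  have "top ` {..<length a} \<subseteq> cyc_index a" using pos by (auto simp: top_def cyc_index_def)
  moreover have "independent_mod {x\<in>M. T x \<in> N} (cyc_vector v) (cyc_index a)"
    using gen by (simp add: cyc_generators_def)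
  ultimately have "independent_mod {x\<in>M. T x \<in> N} (cyc_vector v) (top ` {..<length a})"
    using independent_mod_subset finite_cyc_index by blast
  then have ind: "independent_mod {x\<in>M. T x \<in> N} (cyc_vector v \<circ> top) {..<length a}"
    by (simp add: independent_mod_image_iff[OF inj])
  fix c j assume cN: "(\<Sum>j\<in>{..<length a}. scale (c j) ((T ^^ (a ! j)) (v ! j))) \<in> N"
    and j: "j \<in> {..<length a}"
  define y where "y = (\<Sum>j\<in>{..<length a}. scale (c j) ((cyc_vector v \<circ> top) j))"
  have T_top: "T (cyc_vector v (top j)) = (T ^^ (a ! j)) (v ! j)" if "j < length a" for j
    using pos that by (cases "a ! j") (auto simp: top_def cyc_vector_def)
  have "T y = (\<Sum>j\<in>{..<length a}. scale (c j) ((T ^^ (a ! j)) (v ! j)))"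
    unfolding y_def T.sum T.scale by (intro sum.cong) (simp_all add: T_top)
  moreover have "y \<in> M"
    unfolding y_def using cyc_generators_funpow_mem[OF gen M(2)]
    by (intro subspace_sum[OF M(1)] subspace_scale[OF M(1)]) (simp add: cyc_vector_def top_def)
  ultimately have "y \<in> {x\<in>M. T x \<in> N}" using cN by simp
  then show "c j = 0" using independent_modD[OF ind _ j] unfolding y_def by blast
qed

lemma cyc_index_map_Suc_append:
  "cyc_index (map Suc a @ replicate k 1) =
     cyc_index a \<union> (\<lambda>j. (j, if j < length a then a ! j else 0)) ` {..<length a + k}"
  by (auto simp: cyc_index_def nth_append less_Suc_eq split: if_splits)

lemma cyc_vector_append: "length v = length a \<Longrightarrow> p \<in> cyc_index a \<Longrightarrow> cyc_vector (v @ zs) p = cyc_vector v p"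
  by (auto simp: cyc_index_def cyc_vector_def nth_append)

(* Each chain v_j, ..., T^(a_j - 1) v_j of M/K grows by its top vector T^(a_j) v_j, which lies in K,
   and each vector of zs starts a new chain of length one. *)

lemma cyc_generators_Suc_extend:
  assumes sub: "subspace N" "subspace K" "N \<subseteq> K" "K \<subseteq> M" and TK: "\<forall>x\<in>K. T x \<in> N"
    and gen: "cyc_generators M K m a v"
    and zs: "set zs \<subseteq> K"
      "independent_mod N (\<lambda>j. if j < length a then (T ^^ (a ! j)) (v ! j) else zs ! (j - length a))
        {..<length a + length zs}"
      "K \<subseteq> span (N \<union> (\<lambda>j. if j < length a then (T ^^ (a ! j)) (v ! j) else zs ! (j - length a)) `
        {..<length a + length zs})"
  shows "cyc_generators M N (Suc m) (map Suc a @ replicate (length zs) 1) (v @ zs)"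
proof -
  define h where "h j = (if j < length a then (T ^^ (a ! j)) (v ! j) else zs ! (j - length a))" for j
  define top where "top j = (j, if j < length a then a ! j else 0)" for j
  define I where "I = {..<length a + length zs}"
  define a' where "a' = map Suc a @ replicate (length zs) 1"
  define v' where "v' = v @ zs"
  have gen_K: "length v = length a" "\<forall>j<length a. a ! j \<le> m" "set v \<subseteq> M" "\<forall>j<length a. (T ^^ (a ! j)) (v ! j) \<in> K"
    "independent_mod K (cyc_vector v) (cyc_index a)" "M \<subseteq> span (K \<union> cyc_vector v ` cyc_index a)"
    using gen unfolding cyc_generators_def by auto
  have idx: "cyc_index a' = cyc_index a \<union> top ` I"
    unfolding a'_def top_def I_def by (rule cyc_index_map_Suc_append)
  have disj: "cyc_index a \<inter> top ` I = {}" by (auto simp: cyc_index_def top_def)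
  have vec_old: "cyc_vector v' p = cyc_vector v p" if "p \<in> cyc_index a" for p
    unfolding v'_def using cyc_vector_append gen_K(1) that by blast
  have vec_top: "cyc_vector v' \<circ> top = h"
    using gen_K(1) by (auto simp: v'_def top_def h_def cyc_vector_def nth_append)
  have hK: "h ` I \<subseteq> K" using gen_K(4) zs(1) by (auto simp: h_def I_def)
  have "independent_mod N (cyc_vector v') (cyc_index a')"
    unfolding idx
  proof (rule independent_mod_Un[OF sub(1-3) finite_cyc_index _ disj])
    show "finite (top ` I)" by (simp add: I_def)
    show "independent_mod K (cyc_vector v') (cyc_index a)"
      using gen_K(5) independent_mod_cong[of "cyc_index a"] vec_old by blast
    show "cyc_vector v' ` top ` I \<subseteq> K" using hK vec_top by (simp add: image_comp)
    have "inj_on top I" by (simp add: inj_on_def top_def)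
    then show "independent_mod N (cyc_vector v') (top ` I)"
      using zs(2) vec_top by (simp add: independent_mod_image_iff h_def[abs_def] I_def)
  qed
  moreover have "M \<subseteq> span (N \<union> cyc_vector v' ` cyc_index a')"
  proof -
    have "cyc_vector v' ` cyc_index a' = cyc_vector v ` cyc_index a \<union> h ` I"
      using vec_old vec_top unfolding idx image_Un image_comp[symmetric] by auto
    then have "K \<union> cyc_vector v ` cyc_index a \<subseteq> span (N \<union> cyc_vector v' ` cyc_index a')"
      using zs(3) span_mono[of "N \<union> h ` I" "N \<union> cyc_vector v' ` cyc_index a'"] span_superset
      unfolding h_def I_def by blast
    then show ?thesis using gen_K(6) span_minimal[OF _ subspace_span] by blast
  qed
  moreover have "(T ^^ (a' ! j)) (v' ! j) \<in> N" if "j < length a'" for j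
  proof -
    have "(T ^^ (a' ! j)) (v' ! j) = T (cyc_vector v' (top j))"
      using that gen_K(1) by (auto simp: a'_def v'_def top_def cyc_vector_def nth_append)
    moreover have "cyc_vector v' (top j) \<in> K"
      using hK vec_top that by (auto simp: I_def a'_def)
    ultimately show ?thesis using TK by simp
  qed
  moreover have "length v' = length a'" "\<forall>j<length a'. a' ! j \<le> Suc m" "set v' \<subseteq> M"
    using gen_K(1-3) zs(1) sub(4) by (auto simp: v'_def a'_def nth_append)
  ultimately show ?thesis unfolding cyc_generators_def a'_def v'_def by blast
qed

lemma cyc_generators_Suc:
  assumes M: "subspace M" "finitely_spanned M" "T ` M \<subseteq> M" and N: "subspace N" "N \<subseteq> M" "T ` N \<subseteq> N"
    and gen: "cyc_generators M {x\<in>M. T x \<in> N} m a v" and pos: "\<forall>j<length a. 0 < a ! j"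
  obtains a' v' where "cyc_generators M N (Suc m) a' v'" "\<forall>j<length a'. 0 < a' ! j"
proof -
  define K where "K = {x\<in>M. T x \<in> N}"
  have K: "subspace K" "N \<subseteq> K" "K \<subseteq> M" "finitely_spanned K" "\<forall>x\<in>K. T x \<in> N"
    using subspace_preimage[OF M(1) N(1)] N(2,3) finitely_spanned_subset[OF M(2)] unfolding K_def by auto
  have "(\<lambda>j. (T ^^ (a ! j)) (v ! j)) ` {..<length a} \<subseteq> K"
    using gen unfolding cyc_generators_def K_def by auto
  then obtain zs where zs: "set zs \<subseteq> K"
      "independent_mod N (\<lambda>j. if j < length a then (T ^^ (a ! j)) (v ! j) else zs ! (j - length a))
        {..<length a + length zs}"
      "K \<subseteq> span (N \<union> (\<lambda>j. if j < length a then (T ^^ (a ! j)) (v ! j) else zs ! (j - length a)) `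
        {..<length a + length zs})"
    using independent_mod_extend[OF N(1) K(2) K(4) _ independent_mod_funpow_generators[OF M(1,3) gen pos]]
    by blast
  have "cyc_generators M N (Suc m) (map Suc a @ replicate (length zs) 1) (v @ zs)"
    using cyc_generators_Suc_extend[OF N(1) K(1-3) K(5) gen[folded K_def] zs] .
  moreover have "\<forall>j<length (map Suc a @ replicate (length zs) 1). 0 < (map Suc a @ replicate (length zs) 1) ! j"
    by (simp add: nth_append)
  ultimately show ?thesis by (rule that)
qed

lemma cyc_generators_exists:
  assumes M: "subspace M" "finitely_spanned M" "T ` M \<subseteq> M" and N: "subspace N" "N \<subseteq> M" "T ` N \<subseteq> N"
    and nilp: "(T ^^ m) ` M \<subseteq> N"
  obtains a v where "cyc_generators M N m a v" "\<forall>j<length a. 0 < a ! j"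
  using N nilp
proof (induction m arbitrary: N thesis)
  case 0
  then have "cyc_generators M N 0 [] []"
    unfolding cyc_generators_def independent_mod_def cyc_index_def using span_superset[of N] by auto
  then show ?case using 0 by simp
next
  case (Suc m)
  define K where "K = {x\<in>M. T x \<in> N}"
  have "subspace K" "K \<subseteq> M" "T ` K \<subseteq> K"
    using subspace_preimage[OF M(1) Suc.prems(2)] Suc.prems(4) M(3) unfolding K_def by auto
  moreover have "(T ^^ m) ` M \<subseteq> K"
    using Suc.prems(5) funpow_mem[OF M(3)] unfolding K_def by auto
  ultimately obtain a v where gen: "cyc_generators M K m a v" and pos: "\<forall>j<length a. 0 < a ! j"
    using Suc.IH by blast
  show ?case by (rule cyc_generators_Suc[OF M Suc.prems(2-4) gen[unfolded K_def] pos Suc.prems(1)])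
qed

lemma cyc_generators_append_zeros:
  assumes "subspace M" "subspace N" "cyc_generators M N m a v"
  shows "cyc_generators M N m (a @ replicate k 0) (v @ replicate k 0)"
proof -
  have len: "length v = length a" using assms(3) by (simp add: cyc_generators_def)
  have idx: "cyc_index (a @ replicate k 0) = cyc_index a"
    by (auto simp: cyc_index_def nth_append split: if_splits)
  have vec: "cyc_vector (v @ replicate k 0) p = cyc_vector v p" if "p \<in> cyc_index a" for p
    using that len by (auto simp: cyc_index_def cyc_vector_def nth_append)
  then have "cyc_vector (v @ replicate k 0) ` cyc_index a = cyc_vector v ` cyc_index a"
    by (rule image_cong[OF refl])
  moreover have "independent_mod N (cyc_vector (v @ replicate k 0)) (cyc_index a)"
    using assms(3) independent_mod_cong[of "cyc_index a", OF vec] by (simp add: cyc_generators_def)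
  moreover have "0 \<in> M" "0 \<in> N" using assms(1,2) by (simp_all add: subspace_0)
  ultimately show ?thesis
    using assms(3) len unfolding cyc_generators_def idx by (auto simp: nth_append)
qed

lemma Hdg_eq_hdg_poly:
  assumes M: "subspace M" "finitely_spanned M" "T ` M \<subseteq> M" and N: "subspace N" "N \<subseteq> M" "T ` N \<subseteq> N"
    and nilp: "(T ^^ m) ` M \<subseteq> N" and h: "quot_dim M N 1 \<le> h"
  obtains a where "length a = h" "\<forall>j<h. a ! j \<le> m" "\<forall>t. quot_dim M N t = (\<Sum>j<h. min (a ! j) t)"
    "Hdg scale T M N h m = hdg_poly m a"
proof -
  define A where "A = (SOME a. length a = h \<and> cyc_decomp scale T M N m a)"
  obtain a0 v0 where gen0: "cyc_generators M N m a0 v0" and pos: "\<forall>j<length a0. 0 < a0 ! j"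
    using cyc_generators_exists[OF M N nilp] .
  have "quot_dim M N 1 = length a0"
    using quot_dim_cyc_generators[OF M(2,3) N gen0] pos by (simp add: Suc_leI min_absorb2)
  then have "cyc_generators M N m (a0 @ replicate (h - length a0) 0) (v0 @ replicate (h - length a0) 0)"
    and "length (a0 @ replicate (h - length a0) 0) = h"
    using cyc_generators_append_zeros[OF M(1) N(1) gen0] h by auto
  then have "\<exists>a. length a = h \<and> cyc_decomp scale T M N m a"
    unfolding cyc_decomp_iff_cyc_generators by blast
  then have "length A = h \<and> cyc_decomp scale T M N m A"
    unfolding A_def by (rule someI_ex)
  then obtain v where len: "length A = h" and gen: "cyc_generators M N m A v"
    unfolding cyc_decomp_iff_cyc_generators by blast
  show ?thesis
  proof (rule that)
    show "length A = h" by (fact len)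
    show "\<forall>j<h. A ! j \<le> m" using gen len by (simp add: cyc_generators_def)
    show "\<forall>t. quot_dim M N t = (\<Sum>j<h. min (A ! j) t)" using quot_dim_cyc_generators[OF M(2,3) N gen] len by simp
    show "Hdg scale T M N h m = hdg_poly m A" by (simp add: Hdg_def A_def)
  qed
qed

lemma finitely_spanned_if_generated:
  assumes "\<forall>u\<in>M. (T ^^ e) u = 0" "set g \<subseteq> M" "M = span {(T ^^ l) (g ! j) | j l. j < length g}"
  shows "finitely_spanned M"
proof -
  have "{(T ^^ l) (g ! j) | j l. j < length g} \<subseteq>
      insert 0 ((\<lambda>(j, l). (T ^^ l) (g ! j)) ` ({..<length g} \<times> {..<e}))"
  proof
    fix y assume "y \<in> {(T ^^ l) (g ! j) | j l. j < length g}"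
    then obtain j l where jl: "j < length g" "y = (T ^^ l) (g ! j)" by blast
    show "y \<in> insert 0 ((\<lambda>(j, l). (T ^^ l) (g ! j)) ` ({..<length g} \<times> {..<e}))"
    proof (cases "l < e")
      case True
      then show ?thesis using jl by (auto intro!: image_eqI[where x = "(j, l)"])
    next
      case False
      then have "y = (T ^^ (l - e + e)) (g ! j)" using jl by simp
      then have "y = (T ^^ (l - e)) ((T ^^ e) (g ! j))" by (simp only: funpow_add o_apply)
      moreover have "(T ^^ e) (g ! j) = 0" using assms(1,2) jl(1) nth_mem by blast
      ultimately show ?thesis using module_hom.zero[OF module_hom_funpow] by simp
    qed
  qed
  then have "M \<subseteq> span (insert 0 ((\<lambda>(j, l). (T ^^ l) (g ! j)) ` ({..<length g} \<times> {..<e})))"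
    unfolding assms(3) by (rule span_mono)
  moreover have "finite ((\<lambda>(j, l). (T ^^ l) (g ! j)) ` ({..<length g} \<times> {..<e}))" by simp
  ultimately show ?thesis unfolding finitely_spanned_def span_insert_0 by blast
qed

lemma quot_dim_one_le_generators:
  assumes M: "finitely_spanned M" "T ` M \<subseteq> M"
    and g: "set g \<subseteq> M" "M = span {(T ^^ l) (g ! j) | j l. j < length g}"
  shows "quot_dim M {0} 1 \<le> length g"
proof -
  obtain B where B: "finite B" "T ` M \<subseteq> span B" "card B = dim (T ` M)"
    using finitely_spanned_obtain_basis[OF finitely_spanned_linear_image[OF linear_T M(1)]] by metis
  have "{(T ^^ l) (g ! j) | j l. j < length g} \<subseteq> span (set g \<union> B)"
  proof
    fix y assume "y \<in> {(T ^^ l) (g ! j) | j l. j < length g}"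
    then obtain j l where jl: "j < length g" "y = (T ^^ l) (g ! j)" by blast
    show "y \<in> span (set g \<union> B)"
    proof (cases l)
      case 0
      then show ?thesis using jl by (simp add: span_base)
    next
      case (Suc l')
      have "(T ^^ l') (g ! j) \<in> M" using funpow_mem[OF M(2)] g(1) jl(1) nth_mem by blast
      then have "y \<in> span B" using Suc jl(2) B(2) by auto
      then show ?thesis using span_mono[of B "set g \<union> B"] by blast
    qed
  qed
  then have "M \<subseteq> span (set g \<union> B)" unfolding g(2) by (rule span_minimal) simp
  then have "dim M \<le> card (set g \<union> B)" by (rule dim_le_card) (simp add: B(1))
  also have "\<dots> \<le> length g + dim (T ` M)" using card_Un_le[of "set g" B] card_length[of g] B(3) by linarith
  finally show ?thesis by (simp add: quot_dim_zero_submodule)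
qed

end

section \<open>Hodge polygons\<close>

lemma sum_min_le_prefix_sum:
  fixes s :: "nat list"
  assumes "length s = h" "n \<le> h"
  shows "(\<Sum>j<h. min (s ! j) t) \<le> (\<Sum>j<n. s ! j) + (h - n) * t"
proof -
  have "(\<Sum>j<h. min (s ! j) t) = (\<Sum>j<n. min (s ! j) t) + (\<Sum>j\<in>{n..<h}. min (s ! j) t)"
    using assms(2) by (metis atLeast0LessThan sum.atLeastLessThan_concat zero_le)
  also have "\<dots> \<le> (\<Sum>j<n. s ! j) + (\<Sum>j\<in>{n..<h}. t)"
    by (intro add_mono sum_mono) auto
  finally show ?thesis by simp
qed

lemma sorted_sum_min_eq_prefix_sum:
  fixes s :: "nat list"
  assumes "sorted s" "length s = h" "n \<le> h"
  obtains t where "(\<Sum>j<h. min (s ! j) t) = (\<Sum>j<n. s ! j) + (h - n) * t"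
proof (cases "n < h")
  case True
  have "(\<Sum>j<h. min (s ! j) (s ! n)) = (\<Sum>j<n. min (s ! j) (s ! n)) + (\<Sum>j\<in>{n..<h}. min (s ! j) (s ! n))"
    using assms(3) by (metis atLeast0LessThan sum.atLeastLessThan_concat zero_le)
  also have "\<dots> = (\<Sum>j<n. s ! j) + (\<Sum>j\<in>{n..<h}. s ! n)"
    using assms True
    by (intro arg_cong2[where f = "(+)"] sum.cong) (auto simp: sorted_iff_nth_mono min_def intro: le_antisym)
  finally show ?thesis using that by simp
next
  case False
  then have "n = h" using assms(3) by simp
  moreover have "(\<Sum>j<h. min (s ! j) (sum_list s)) = (\<Sum>j<h. s ! j)"
    using assms(2) elem_le_sum_list[of _ s] by (intro sum.cong) (auto simp: min_absorb1)
  ultimately show ?thesis using that by simp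
qed

lemma sum_nth_sort:
  fixes a :: "'a::linorder list" and f :: "'a \<Rightarrow> 'b::comm_monoid_add"
  shows "(\<Sum>j<length a. f (sort a ! j)) = (\<Sum>j<length a. f (a ! j))"
proof -
  have "(\<Sum>j<length xs. f (xs ! j)) = sum_list (map f xs)" for xs :: "'a list"
    by (simp add: sum_list_sum_nth atLeast0LessThan)
  moreover have "sum_list (map f (insort x ys)) = f x + sum_list (map f ys)" for x ys
    by (induction ys) (auto simp: add.left_commute)
  then have "sum_list (map f (sort a)) = sum_list (map f a)" by (induction a) simp_all
  ultimately show ?thesis by (metis length_sort)
qed

lemma sorted_prefix_sums_superadditive:
  fixes A B C :: "nat list"
  assumes len: "length A = h" "length B = h" "length C = h"
    and super: "\<And>t1 t2. (\<Sum>j<h. min (B ! j) t1) + (\<Sum>j<h. min (C ! j) t2) \<le> (\<Sum>j<h. min (A ! j) (t1 + t2))"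
    and n: "n \<le> h"
  shows "(\<Sum>j<n. sort B ! j) + (\<Sum>j<n. sort C ! j) \<le> (\<Sum>j<n. sort A ! j)"
proof -
  have sort: "(\<Sum>j<h. min (X ! j) t) = (\<Sum>j<h. min (sort X ! j) t)" if "length X = h" for X :: "nat list" and t
    using sum_nth_sort[where a = X and f = "\<lambda>x. min x t"] that by simp
  obtain t1 where t1: "(\<Sum>j<h. min (sort B ! j) t1) = (\<Sum>j<n. sort B ! j) + (h - n) * t1"
    using sorted_sum_min_eq_prefix_sum[of "sort B" h n] len(2) n by auto
  obtain t2 where t2: "(\<Sum>j<h. min (sort C ! j) t2) = (\<Sum>j<n. sort C ! j) + (h - n) * t2"
    using sorted_sum_min_eq_prefix_sum[of "sort C" h n] len(3) n by auto
  have "(\<Sum>j<n. sort B ! j) + (h - n) * t1 + ((\<Sum>j<n. sort C ! j) + (h - n) * t2)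
      \<le> (\<Sum>j<n. sort A ! j) + (h - n) * (t1 + t2)"
    using super[of t1 t2] sum_min_le_prefix_sum[of "sort A" h n "t1 + t2"] len n
    unfolding sort[OF len(1)] sort[OF len(2)] sort[OF len(3)] t1 t2 by simp
  then show ?thesis by (simp add: add_mult_distrib2)
qed

lemma prefix_sum_interpolation_nonneg:
  fixes f :: "nat \<Rightarrow> real"
  assumes prefix: "\<And>k. k \<le> h \<Longrightarrow> 0 \<le> (\<Sum>j<k. f j)" and x: "0 \<le> x" "x \<le> real h"
  shows "0 \<le> (\<Sum>j<nat \<lfloor>x\<rfloor>. f j) + (x - real (nat \<lfloor>x\<rfloor>)) * f (nat \<lfloor>x\<rfloor>)"
proof -
  define n where "n = nat \<lfloor>x\<rfloor>"
  define \<theta> where "\<theta> = x - real n"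
  have \<theta>: "0 \<le> \<theta>" "\<theta> < 1" using x(1) unfolding \<theta>_def n_def by linarith+
  have "n \<le> h" using x unfolding n_def by (simp add: nat_le_iff floor_le_iff)
  show ?thesis
  proof (cases "n < h")
    case True
    have "(\<Sum>j<n. f j) + \<theta> * f n = (1 - \<theta>) * (\<Sum>j<n. f j) + \<theta> * (\<Sum>j<Suc n. f j)"
      by (simp add: algebra_simps)
    also have "\<dots> \<ge> 0" using prefix[of n] prefix[of "Suc n"] True \<open>n \<le> h\<close> \<theta> by simp
    finally show ?thesis unfolding n_def \<theta>_def by simp
  next
    case False
    then have "\<theta> = 0" using x(2) \<theta>(1) \<open>n \<le> h\<close> unfolding \<theta>_def by simp
    then show ?thesis using prefix[OF \<open>n \<le> h\<close>] unfolding n_def \<theta>_def by simp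
  qed
qed

lemma hdg_poly_scaled:
  assumes "\<forall>j<length a. a ! j \<le> m" "0 \<le> x" "x \<le> real (length a)"
  shows "real m * hdg_poly m a x =
    (\<Sum>j<nat \<lfloor>x\<rfloor>. real (sort a ! j)) + (x - real (nat \<lfloor>x\<rfloor>)) * real (sort a ! nat \<lfloor>x\<rfloor>)"
proof (cases "m = 0")
  case True
  \<comment> \<open>division by zero makes \<open>hdg_poly 0 a\<close> vanish, so all exponents must be 0\<close>
  have "nat \<lfloor>x\<rfloor> \<le> length a" using assms(3) by (simp add: nat_le_iff floor_le_iff)
  moreover have "sort a ! j = 0" if "j < length a" for j
    using assms(1) True nth_mem[of j "sort a"] that by (auto simp: in_set_conv_nth)
  moreover have "nat \<lfloor>x\<rfloor> = length a \<Longrightarrow> x - real (nat \<lfloor>x\<rfloor>) = 0" using assms(2,3) by linarith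
  ultimately show ?thesis using True by (cases "nat \<lfloor>x\<rfloor> < length a") simp_all
next
  case False
  then show ?thesis unfolding hdg_poly_def Let_def by (simp add: sum_distrib_left distrib_left)
qed

lemma poly_star_hdg_poly_le:
  fixes A B C :: "nat list"
  assumes len: "length A = h" "length B = h" "length C = h"
    and bounds: "\<forall>j<h. A ! j \<le> e" "\<forall>j<h. B ! j \<le> i" "\<forall>j<h. C ! j \<le> e - i" and "i \<le> e" "0 < e"
    and super: "\<And>t1 t2. (\<Sum>j<h. min (B ! j) t1) + (\<Sum>j<h. min (C ! j) t2) \<le> (\<Sum>j<h. min (A ! j) (t1 + t2))"
    and x: "0 \<le> x" "x \<le> real h"
  shows "poly_star i (hdg_poly i B) (e - i) (hdg_poly (e - i) C) x \<le> hdg_poly e A x"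
proof -
  define f where "f j = real (sort A ! j) - real (sort B ! j) - real (sort C ! j)" for j
  have "0 \<le> (\<Sum>j<k. f j)" if "k \<le> h" for k
  proof -
    have "real ((\<Sum>j<k. sort B ! j) + (\<Sum>j<k. sort C ! j)) \<le> real (\<Sum>j<k. sort A ! j)"
      using sorted_prefix_sums_superadditive[OF len super that] by (rule of_nat_mono)
    then show ?thesis by (simp add: f_def sum_subtractf)
  qed
  then have "0 \<le> (\<Sum>j<nat \<lfloor>x\<rfloor>. f j) + (x - real (nat \<lfloor>x\<rfloor>)) * f (nat \<lfloor>x\<rfloor>)"
    using prefix_sum_interpolation_nonneg x by blast
  also have "\<dots> = real e * hdg_poly e A x - real i * hdg_poly i B x - real (e - i) * hdg_poly (e - i) C x"
    using hdg_poly_scaled[of A e x] hdg_poly_scaled[of B i x] hdg_poly_scaled[of C "e - i" x] len bounds x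
    by (simp add: f_def sum_subtractf sum.distrib algebra_simps)
  finally have "real i * hdg_poly i B x + real (e - i) * hdg_poly (e - i) C x \<le> real e * hdg_poly e A x"
    by simp
  moreover have "real (i + (e - i)) = real e" using \<open>i \<le> e\<close> by simp
  ultimately show ?thesis using \<open>0 < e\<close> unfolding poly_star_def by (simp add: divide_le_eq mult.commute)
qed

theorem mainTheorem6:
  fixes scale :: "'k::field \<Rightarrow> 'v::ab_group_add \<Rightarrow> 'v"
    and T :: "'v \<Rightarrow> 'v" and M N :: "'v set" and e h i :: nat and x :: real
  assumes "vector_space scale"
    and "Vector_Spaces.linear scale scale T"
    and "module.subspace scale M" and "T ` M \<subseteq> M"
    and "\<forall>u\<in>M. (T ^^ e) u = 0"
    and "\<exists>g. length g \<le> h \<and> set g \<subseteq> M \<and>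
           M = module.span scale {(T ^^ l) (g ! j) | j l. j < length g}"
    and "1 \<le> e" and "1 \<le> h" and "1 \<le> i" and "i \<le> e"
    and "module.subspace scale N" and "N \<subseteq> M" and "T ` N \<subseteq> N"
    and "\<forall>u\<in>N. (T ^^ i) u = 0"
    and "(T ^^ (e - i)) ` M \<subseteq> N"
    and "0 \<le> x" and "x \<le> real h"
  shows "Hdg scale T M {0} h e x \<ge>
         poly_star i (Hdg scale T N {0} h i) (e - i) (Hdg scale T M N h (e - i)) x"
proof -
  interpret kT_module scale T by (intro kT_module.intro kT_module_axioms.intro assms(1,2))
  obtain g where g: "length g \<le> h" "set g \<subseteq> M" "M = span {(T ^^ l) (g ! j) | j l. j < length g}"
    using assms(6) by blast
  have M: "subspace M" "finitely_spanned M" "T ` M \<subseteq> M"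
    using assms(3,4) finitely_spanned_if_generated[OF assms(5) g(2,3)] by auto
  have N: "subspace N" "finitely_spanned N" "T ` N \<subseteq> N"
    using assms(11,13) finitely_spanned_subset[OF M(2) assms(12)] by auto
  have zero: "subspace {0}" "{0} \<subseteq> N" "{0} \<subseteq> M" "T ` {0} \<subseteq> {0}"
    using subspace_0[OF N(1)] assms(12) module_hom.zero[OF module_hom_funpow, of 1] by auto
  have super: "quot_dim N {0} t1 + quot_dim M N t2 \<le> quot_dim M {0} (t1 + t2)" for t1 t2
    by (rule quot_dim_superadditive[OF M N(1) assms(12) N(3)])
  have hM: "quot_dim M {0} 1 \<le> h" using quot_dim_one_le_generators[OF M(2,3) g(2,3)] g(1) by simp
  have hN: "quot_dim N {0} 1 \<le> h" using super[of 1 0] hM quot_dim_at_0[OF assms(12)] by simp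
  have hQ: "quot_dim M N 1 \<le> h" using super[of 0 1] hM quot_dim_at_0[OF zero(2)] by simp
  have "(T ^^ e) ` M \<subseteq> {0}" "(T ^^ i) ` N \<subseteq> {0}" using assms(5,14) by auto
  obtain A where A: "length A = h" "\<forall>j<h. A ! j \<le> e" "\<forall>t. quot_dim M {0} t = (\<Sum>j<h. min (A ! j) t)"
      "Hdg scale T M {0} h e = hdg_poly e A"
    by (rule Hdg_eq_hdg_poly[OF M zero(1,3,4) \<open>(T ^^ e) ` M \<subseteq> {0}\<close> hM])
  obtain B where B: "length B = h" "\<forall>j<h. B ! j \<le> i" "\<forall>t. quot_dim N {0} t = (\<Sum>j<h. min (B ! j) t)"
      "Hdg scale T N {0} h i = hdg_poly i B"
    by (rule Hdg_eq_hdg_poly[OF N zero(1,2,4) \<open>(T ^^ i) ` N \<subseteq> {0}\<close> hN])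
  obtain C where C: "length C = h" "\<forall>j<h. C ! j \<le> e - i" "\<forall>t. quot_dim M N t = (\<Sum>j<h. min (C ! j) t)"
      "Hdg scale T M N h (e - i) = hdg_poly (e - i) C"
    by (rule Hdg_eq_hdg_poly[OF M N(1) assms(12) N(3) assms(15) hQ])
  show ?thesis
    unfolding A(4) B(4) C(4)
    by (rule poly_star_hdg_poly_le[OF A(1) B(1) C(1) A(2) B(2) C(2) assms(10)])
      (use assms(7,16,17) super A(3) B(3) C(3) in simp_all)
qed

end
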